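(* There exists a position-optimization game $\mathcal{G}_n(\mathcal{X},\mathcal{Y},d,Q)$ (as defined in the context) with $n=\frac{1}{p_0}$ that has a pure Nash equilibrium $\bm{x}$ which does not cover $\mathcal{X}^*$ (some $x\in\mathcal{X}^*$ has $k_{\bm{x}}(x)=0$) and is not extreme (some player $i$ has $x_i\notin\mathcal{X}^*$).
   Context: Position-optimization game: $\mathcal{X}$ is an arbitrary set of positions, $\mathcal{Y}$ an arbitrary set of targets, $d:\mathcal{X}\times\mathcal{Y}\to[0,\infty]$ a proximity function. For $y\in\mathcal{Y}$ let $x^*(y)=\arg\min_{x\in\mathcal{X}} d(x,y)$, and $\mathcal{X}^*=\bigcup_{y\in\mathcal{Y}}x^*(y)$ (pseudo-targets). $Q$ is a probability distribution on $\mathcal{Y}$ with $Q(\{y:|x^*(y)|>1\})=0$ and $|\mathcal{X}^*|<\infty$. For $x\in\mathcal{X}^*$ let $P(x)=Q(\{y: x^*(y)=\{x\}\})$ and $p_0=\min_{x\in\mathcal{X}^*}P(x)$. In the game $\mathcal{G}_n(\mathcal{X},\mathcal{Y},d,Q)$, players $i\in[n]$ choose positions $x_i\in\mathcal{X}$, $\bm{x}=(x_1,\dots,x_n)$; with $X_{\min}(\bm{x},y)=\arg\min_{x_i\in\bm{x}} d(x_i,y)$, player $i$'s utility is $u_i(x_i,\bm{x}_{-i})=\mathbb{E}_{y\sim Q}\big[\mathbb{1}[x_i\in X_{\min}(\bm{x},y)]/|X_{\min}(\bm{x},y)|\big]$. A pure Nash equilibrium is $\bm{x}$ with $u_i(x_i',\bm{x}_{-i})\le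 u_i(x_i,\bm{x}_{-i})$ for all $i$, $x_i'\in\mathcal{X}$. $k_{\bm{x}}(x)$ is the number of players at position $x$. *)

theory Defs
  imports "HOL-Probability.Probability"
begin

text \<open>Positions and targets live in ambient types 'x, 'y;
  the position set is X, the target set is Y, d is the proximity function with values in
  [0,\<infinity>] (ennreal), Q is a (discrete) probability distribution on targets.
  A strategy profile of n players is a function xs from player indices {0..<n} to positions.\<close>

definition xstar :: "'x set \<Rightarrow> ('x \<Rightarrow> 'y \<Rightarrow> ennreal) \<Rightarrow> 'y \<Rightarrow> 'x set" where
  "xstar X d y = {x \<in> X. \<forall>x'\<in>X. d x y \<le> d x' y}"

definition Xstar :: "'x set \<Rightarrow> 'y set \<Rightarrow> ('x \<Rightarrow> 'y \<Rightarrow> ennreal) \<Rightarrow> 'x set" where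
  "Xstar X Y d = (\<Union>y\<in>Y. xstar X d y)"

definition Pmass :: "'x set \<Rightarrow> ('x \<Rightarrow> 'y \<Rightarrow> ennreal) \<Rightarrow> 'y pmf \<Rightarrow> 'x \<Rightarrow> real" where
  "Pmass X d Q x = measure_pmf.prob Q {y. xstar X d y = {x}}"

definition p0 :: "'x set \<Rightarrow> 'y set \<Rightarrow> ('x \<Rightarrow> 'y \<Rightarrow> ennreal) \<Rightarrow> 'y pmf \<Rightarrow> real" where
  "p0 X Y d Q = Min (Pmass X d Q ` Xstar X Y d)"

definition valid_game :: "'x set \<Rightarrow> 'y set \<Rightarrow> ('x \<Rightarrow> 'y \<Rightarrow> ennreal) \<Rightarrow> 'y pmf \<Rightarrow> bool" where
  "valid_game X Y d Q \<longleftrightarrow> X \<noteq> {} \<and> set_pmf Q \<subseteq> Y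
     \<and> measure_pmf.prob Q {y. \<exists>a b. a \<noteq> b \<and> a \<in> xstar X d y \<and> b \<in> xstar X d y} = 0
     \<and> finite (Xstar X Y d)"

definition Xmin :: "('x \<Rightarrow> 'y \<Rightarrow> ennreal) \<Rightarrow> nat \<Rightarrow> (nat \<Rightarrow> 'x) \<Rightarrow> 'y \<Rightarrow> nat set" where
  "Xmin d n xs y = {j. j < n \<and> (\<forall>k<n. d (xs j) y \<le> d (xs k) y)}"

definition utility :: "('x \<Rightarrow> 'y \<Rightarrow> ennreal) \<Rightarrow> 'y pmf \<Rightarrow> nat \<Rightarrow> (nat \<Rightarrow> 'x) \<Rightarrow> nat \<Rightarrow> real" where
  "utility d Q n xs i = measure_pmf.expectation Q
     (\<lambda>y. if i \<in> Xmin d n xs y then 1 / real (card (Xmin d n xs y)) else 0)"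

definition pure_NE :: "'x set \<Rightarrow> ('x \<Rightarrow> 'y \<Rightarrow> ennreal) \<Rightarrow> 'y pmf \<Rightarrow> nat \<Rightarrow> (nat \<Rightarrow> 'x) \<Rightarrow> bool" where
  "pure_NE X d Q n xs \<longleftrightarrow> (\<forall>i<n. xs i \<in> X) \<and>
     (\<forall>i<n. \<forall>x'\<in>X. utility d Q n (xs(i := x')) i \<le> utility d Q n xs i)"

definition kcount :: "nat \<Rightarrow> (nat \<Rightarrow> 'x) \<Rightarrow> 'x \<Rightarrow> nat" where
  "kcount n xs x = card {i. i < n \<and> xs i = x}"

end

theory Submission
  imports Defs
begin

text \<open>Two equally likely targets 0 and 1 are each served exactly by the position of the same
  name, which is at distance 2 from the other target, and position 2 is a hub at distance 1 from
  both. So the pseudo-targets are 0 and 1, each of mass 1/2, and 1/p0 = 2. Two players on the hub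
  split both targets and earn 1/2 each; a player deviating to a target's position wins that target
  but loses the other one to the hub, again earning 1/2. Hence the hub profile is an equilibrium
  that covers no pseudo-target.\<close>

definition hub_dist :: "nat \<Rightarrow> nat \<Rightarrow> ennreal" where
  "hub_dist x y = (if x = y then 0 else if x = 2 then 1 else 2)"

lemma xstar_hub_dist: "y \<in> {0,1} \<Longrightarrow> xstar {0,1,2} hub_dist y = {y}"
  unfolding xstar_def hub_dist_def by auto

lemma Xstar_hub_dist: "Xstar {0,1,2} {0,1} hub_dist = {0,1}"
  unfolding Xstar_def using xstar_hub_dist by auto

lemma prob_pmf_of_set_01:
  "measure_pmf.prob (pmf_of_set {0::nat,1}) A = real (card ({0,1} \<inter> A)) / 2"
  by (subst measure_pmf_of_set) simp_all

lemma Pmass_hub_dist: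
  assumes "x \<in> {0,1}"
  shows "Pmass {0,1,2} hub_dist (pmf_of_set {0,1}) x = 1/2"
proof -
  have "{0,1} \<inter> {y. xstar {0,1,2} hub_dist y = {x}} = {x}"
    using assms xstar_hub_dist by auto
  then show ?thesis
    unfolding Pmass_def prob_pmf_of_set_01 by simp
qed

lemma p0_hub_dist: "p0 {0,1,2} {0,1} hub_dist (pmf_of_set {0,1}) = 1/2"
proof -
  have "Pmass {0,1,2} hub_dist (pmf_of_set {0,1}) ` {0,1} = {1/2}"
    using Pmass_hub_dist by auto
  then show ?thesis
    unfolding p0_def Xstar_hub_dist by simp
qed

lemma valid_game_hub_dist: "valid_game {0,1,2} {0,1} hub_dist (pmf_of_set {0,1})"
  unfolding valid_game_def
proof (intro conjI)
  have "{0,1} \<inter> {y. \<exists>a b. a \<noteq> b \<and> a \<in> xstar {0,1,2} hub_dist y \<and> b \<in> xstar {0,1,2} hub_dist y}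
      = {}"
    using xstar_hub_dist by auto
  then show "measure_pmf.prob (pmf_of_set {0,1})
      {y. \<exists>a b. a \<noteq> b \<and> a \<in> xstar {0,1,2} hub_dist y \<and> b \<in> xstar {0,1,2} hub_dist y} = 0"
    unfolding prob_pmf_of_set_01 by simp
qed (unfold Xstar_hub_dist, auto)

lemma Xmin_two_players:
  "Xmin d 2 xs y =
     (if d (xs 0) y \<le> d (xs 1) y then {0} else {}) \<union> (if d (xs 1) y \<le> d (xs 0) y then {1} else {})"
proof -
  have less_2: "k < 2 \<longleftrightarrow> k = 0 \<or> k = 1" for k :: nat
    by auto
  show ?thesis
    unfolding Xmin_def less_2 by (auto simp: linorder_not_le)
qed

lemma utility_uniform_two_targets:
  fixes d :: "'x \<Rightarrow> nat \<Rightarrow> ennreal"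
  shows "utility d (pmf_of_set {0,1}) n xs i =
    ((if i \<in> Xmin d n xs 0 then 1 / real (card (Xmin d n xs 0)) else 0) +
     (if i \<in> Xmin d n xs 1 then 1 / real (card (Xmin d n xs 1)) else 0)) / 2"
  unfolding utility_def by (subst integral_pmf_of_set) simp_all

lemma utility_hub_deviation:
  assumes "i < 2" "x \<in> {0,1,2}"
  shows "utility hub_dist (pmf_of_set {0,1}) 2 ((\<lambda>_. 2)(i := x)) i = 1/2"
proof -
  have "i = 0 \<or> i = 1" "x = 0 \<or> x = 1 \<or> x = 2"
    using assms by auto
  then show ?thesis
    unfolding utility_uniform_two_targets Xmin_two_players
    by (elim disjE; simp add: hub_dist_def)
qed

lemma pure_NE_hub: "pure_NE {0,1,2} hub_dist (pmf_of_set {0,1}) 2 (\<lambda>_. 2)"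
  unfolding pure_NE_def
proof (intro conjI allI impI ballI)
  fix i x :: nat
  assume i: "i < 2" and x: "x \<in> {0,1,2}"
  have "(\<lambda>_. 2::nat)(i := 2) = (\<lambda>_. 2)"
    by (rule fun_upd_idem) (rule refl)
  then have "utility hub_dist (pmf_of_set {0,1}) 2 (\<lambda>_. 2) i = 1/2"
    using utility_hub_deviation[OF i, of 2] by simp
  then show "utility hub_dist (pmf_of_set {0,1}) 2 ((\<lambda>_. 2)(i := x)) i
      \<le> utility hub_dist (pmf_of_set {0,1}) 2 (\<lambda>_. 2) i"
    using utility_hub_deviation[OF i x] by simp
qed simp

theorem proposition1:
  shows "\<exists>(X::nat set) (Y::nat set) (d::nat \<Rightarrow> nat \<Rightarrow> ennreal) (Q::nat pmf) (n::nat) (xs::nat \<Rightarrow> nat).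
           valid_game X Y d Q \<and> real n = 1 / p0 X Y d Q \<and> pure_NE X d Q n xs
           \<and> (\<exists>x\<in>Xstar X Y d. kcount n xs x = 0)
           \<and> (\<exists>i<n. xs i \<notin> Xstar X Y d)"
proof (intro exI conjI)
  show "valid_game {0,1,2} {0,1} hub_dist (pmf_of_set {0,1})"
    by (rule valid_game_hub_dist)
  show "real 2 = 1 / p0 {0,1,2} {0,1} hub_dist (pmf_of_set {0,1})"
    unfolding p0_hub_dist by simp
  show "pure_NE {0,1,2} hub_dist (pmf_of_set {0,1}) 2 (\<lambda>_. 2)"
    by (rule pure_NE_hub)
  show "\<exists>x\<in>Xstar {0,1,2} {0,1} hub_dist. kcount 2 (\<lambda>_. 2) x = 0"
    unfolding Xstar_hub_dist kcount_def by simp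
  show "(0::nat) < 2"
    by simp
  show "(2::nat) \<notin> Xstar {0,1,2} {0,1} hub_dist"
    unfolding Xstar_hub_dist by simp
qed

end
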